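(* Let $\mathbf v\in\mathbb R_{>0}^m$. If $(\mathcal V,\mathcal W)\in\mathcal{DRS}_{\mathbf v}$ is a local $d_P$-minimizer of the joint potential $\mathrm{FP}$ on $\mathcal{DRS}_{\mathbf v}$, then $\mathcal W=\mathcal V^\#$.
   Context: Fix integers $m,d\ge1$ and $\mathbf k=(k_1,\dots,k_m)\in\mathbb N^m$ with each $k_i\le d$. A system is an $m$-tuple $\mathcal V=(V_i)_{i=1}^m$ with $V_i\in L(\mathbb C^d,\mathbb C^{k_i})$. Its analysis operator is $T_{\mathcal V}x=(V_1x,\dots,V_mx)$ and its RS operator is $S_{\mathcal V}=T_{\mathcal V}^*T_{\mathcal V}=\sum_iV_i^*V_i$; $\mathcal V$ is a reconstruction system (RS) if $S_{\mathcal V}$ is invertible, and $\mathcal{RS}(m,\mathbf k,d)$ is the set of RS's. Given weights $\mathbf v\in\mathbb R_{>0}^m$, $\mathcal P_{\mathbf v}(m,\mathbf k,d)$ is the set of RS's with $V_iV_i^*=v_i^2I_{k_i}$ for all $i$. The canonical dual is $\mathcal V^\#=(V_iS_{\mathcal V}^{-1})_i$; $\mathcal W\in\mathcal{RS}$ is a dual of $\mathcal V$ if $\sum_iW_i^*V_i=I_d$, and $\mathcal D(\mathcal V)$ is the set of duals. $\mathcal{DRS}_{\mathbf v}=\{(\mathcal V,\mathcal W)\in\mathcal P_{\mathbf v}\times\mathcal{RS}(m,\mathbf k,d):\mathcal W\in\mathcal D(\mathcal V)\}$, with joint potential $\mathrm{FP}(\mathcal V,\mathcal W)=\operatorname{tr}S_{\mathcal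 V}^2+\operatorname{tr}S_{\mathcal W}^2$. The metric $d_P(\mathcal V,\mathcal W)=(\sum_i\|V_i-W_i\|_2^2)^{1/2}$ uses the Frobenius norm. A pair $(\mathcal V,\mathcal W)\in\mathcal{DRS}_{\mathbf v}$ is a local $d_P$-minimizer of FP if there is $\varepsilon>0$ such that $\mathrm{FP}(\mathcal V',\mathcal W')\ge\mathrm{FP}(\mathcal V,\mathcal W)$ for all $(\mathcal V',\mathcal W')\in\mathcal{DRS}_{\mathbf v}$ with $d_P(\mathcal V,\mathcal V')+d_P(\mathcal W,\mathcal W')<\varepsilon$. *)

theory Defs
  imports "Jordan_Normal_Form.Schur_Decomposition" "Jordan_Normal_Form.Gauss_Jordan_Elimination"
begin

(* A system V = (V_i)_{i<m} is modelled as  V :: nat => complex mat  with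
   V i \<in> carrier_mat (k i) d for i < m  (i.e. V_i : C^d -> C^{k_i}).
   Indices are 0-based: i ranges over {0..<m}. *)

definition is_system :: "nat \<Rightarrow> (nat \<Rightarrow> nat) \<Rightarrow> nat \<Rightarrow> (nat \<Rightarrow> complex mat) \<Rightarrow> bool" where
  "is_system m k d V \<longleftrightarrow> (\<forall>i<m. V i \<in> carrier_mat (k i) d)"

definition rs_op :: "nat \<Rightarrow> nat \<Rightarrow> (nat \<Rightarrow> complex mat) \<Rightarrow> complex mat" where
  "rs_op m d V = mat d d (\<lambda>(a, b). \<Sum>i<m. (mat_adjoint (V i) * V i) $$ (a, b))"

definition is_RS :: "nat \<Rightarrow> (nat \<Rightarrow> nat) \<Rightarrow> nat \<Rightarrow> (nat \<Rightarrow> complex mat) \<Rightarrow> bool" where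
  "is_RS m k d V \<longleftrightarrow> is_system m k d V \<and> invertible_mat (rs_op m d V)"

definition is_Pv :: "nat \<Rightarrow> (nat \<Rightarrow> nat) \<Rightarrow> nat \<Rightarrow> (nat \<Rightarrow> real) \<Rightarrow> (nat \<Rightarrow> complex mat) \<Rightarrow> bool" where
  "is_Pv m k d v V \<longleftrightarrow> is_RS m k d V \<and>
     (\<forall>i<m. V i * mat_adjoint (V i) = complex_of_real ((v i)\<^sup>2) \<cdot>\<^sub>m 1\<^sub>m (k i))"

definition rs_inv :: "nat \<Rightarrow> nat \<Rightarrow> (nat \<Rightarrow> complex mat) \<Rightarrow> complex mat" where
  "rs_inv m d V = the (mat_inverse (rs_op m d V))"

definition canonical_dual :: "nat \<Rightarrow> nat \<Rightarrow> (nat \<Rightarrow> complex mat) \<Rightarrow> nat \<Rightarrow> complex mat" where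
  "canonical_dual m d V = (\<lambda>i. V i * rs_inv m d V)"

definition is_dual :: "nat \<Rightarrow> (nat \<Rightarrow> nat) \<Rightarrow> nat \<Rightarrow> (nat \<Rightarrow> complex mat) \<Rightarrow> (nat \<Rightarrow> complex mat) \<Rightarrow> bool" where
  "is_dual m k d V W \<longleftrightarrow> is_RS m k d W \<and>
     mat d d (\<lambda>(a, b). \<Sum>i<m. (mat_adjoint (W i) * V i) $$ (a, b)) = 1\<^sub>m d"

definition is_DRS :: "nat \<Rightarrow> (nat \<Rightarrow> nat) \<Rightarrow> nat \<Rightarrow> (nat \<Rightarrow> real) \<Rightarrow> (nat \<Rightarrow> complex mat) \<Rightarrow> (nat \<Rightarrow> complex mat) \<Rightarrow> bool" where
  "is_DRS m k d v V W \<longleftrightarrow> is_Pv m k d v V \<and> is_dual m k d V W"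

definition mtrace :: "complex mat \<Rightarrow> complex" where
  "mtrace A = (\<Sum>i<dim_row A. A $$ (i, i))"

(* joint frame potential FP(V,W) = tr S_V^2 + tr S_W^2 (real, since S_V, S_W are
   Hermitian; we take the real part explicitly) *)
definition FP :: "nat \<Rightarrow> nat \<Rightarrow> (nat \<Rightarrow> complex mat) \<Rightarrow> (nat \<Rightarrow> complex mat) \<Rightarrow> real" where
  "FP m d V W = Re (mtrace (rs_op m d V * rs_op m d V)) + Re (mtrace (rs_op m d W * rs_op m d W))"

definition frob_norm :: "complex mat \<Rightarrow> real" where
  "frob_norm A = sqrt (\<Sum>a<dim_row A. \<Sum>b<dim_col A. (cmod (A $$ (a, b)))\<^sup>2)"

definition dP :: "nat \<Rightarrow> (nat \<Rightarrow> complex mat) \<Rightarrow> (nat \<Rightarrow> complex mat) \<Rightarrow> real" where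
  "dP m V W = sqrt (\<Sum>i<m. (frob_norm (V i - W i))\<^sup>2)"

definition local_dP_minimizer :: "nat \<Rightarrow> (nat \<Rightarrow> nat) \<Rightarrow> nat \<Rightarrow> (nat \<Rightarrow> real) \<Rightarrow> (nat \<Rightarrow> complex mat) \<Rightarrow> (nat \<Rightarrow> complex mat) \<Rightarrow> bool" where
  "local_dP_minimizer m k d v V W \<longleftrightarrow> is_DRS m k d v V W \<and>
     (\<exists>\<epsilon>>0. \<forall>V' W'. is_DRS m k d v V' W' \<and> dP m V V' + dP m W W' < \<epsilon> \<longrightarrow>
        FP m d V' W' \<ge> FP m d V W)"

end

theory Submission
  imports Defs
begin

(* Let (V, W) be a local d_P-minimizer of FP(V, W) = tr S_V^2 + tr S_W^2 on DRS_v, and put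
   Z = W - V^#.  The proof only perturbs the dual: for real t the system
       W_t = V^# + t Z        (the "dual path", W_1 = W)
   is again a dual of V, because  sum_i Z_i^* V_i = 0.  Since moreover
   sum_i (V^#_i)^* Z_i = 0, the cross terms vanish and  S_{W_t} = S_V^{-1} + t^2 S_Z, hence
       FP(V, W_t) = FP(V, V^#) + 2 t^2 tr(S_V^{-1} S_Z) + t^4 tr(S_Z^2).
   Here tr(S_V^{-1} S_Z) >= 0 (a trace of a product of two RS operators) and tr(S_Z^2) > 0
   as soon as Z is nonzero, so FP(V, W_t) < FP(V, W) for every t in [0,1).  Since
   d_P(W, W_t) = |1 - t| * ||Z||, points with t close to 1 contradict local minimality. *)

lemma adj_dim [simp]:
  "dim_row (mat_adjoint A) = dim_col A" "dim_col (mat_adjoint A) = dim_row A"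
  unfolding mat_adjoint_def by auto

lemma adj_index [simp]:
  "i < dim_col A \<Longrightarrow> j < dim_row A \<Longrightarrow> mat_adjoint (A :: complex mat) $$ (i, j) = cnj (A $$ (j, i))"
  unfolding mat_adjoint_def by (auto simp: mat_of_rows_index)

lemma adj_carrier [simp]: "A \<in> carrier_mat r c \<Longrightarrow> mat_adjoint A \<in> carrier_mat c r"
  by auto

lemma adj_adj [simp]: "mat_adjoint (mat_adjoint (A :: complex mat)) = A"
  by (rule eq_matI) auto

lemma adj_mult:
  "(A :: complex mat) \<in> carrier_mat n p \<Longrightarrow> B \<in> carrier_mat p q \<Longrightarrow>
   mat_adjoint (A * B) = mat_adjoint B * mat_adjoint A"
  by (intro eq_matI) (auto simp: scalar_prod_def mult.commute)

lemma adj_add: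
  "(A :: complex mat) \<in> carrier_mat n p \<Longrightarrow> B \<in> carrier_mat n p \<Longrightarrow>
   mat_adjoint (A + B) = mat_adjoint A + mat_adjoint B"
  by (intro eq_matI) auto

lemma adj_minus:
  "(A :: complex mat) \<in> carrier_mat n p \<Longrightarrow> B \<in> carrier_mat n p \<Longrightarrow>
   mat_adjoint (A - B) = mat_adjoint A - mat_adjoint B"
  by (intro eq_matI) auto

lemma adj_smult_real:
  "mat_adjoint (complex_of_real c \<cdot>\<^sub>m (A :: complex mat)) = complex_of_real c \<cdot>\<^sub>m mat_adjoint A"
  by (intro eq_matI) auto

lemma adj_one [simp]: "mat_adjoint (1\<^sub>m n :: complex mat) = 1\<^sub>m n"
  by (intro eq_matI) auto

lemma adj_zero [simp]: "mat_adjoint (0\<^sub>m r c :: complex mat) = 0\<^sub>m c r"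
  by (intro eq_matI) auto

definition msum :: "nat \<Rightarrow> nat \<Rightarrow> nat \<Rightarrow> (nat \<Rightarrow> complex mat) \<Rightarrow> complex mat" where
  "msum r c m f = mat r c (\<lambda>(a, b). \<Sum>i<m. f i $$ (a, b))"

lemma msum_carrier [simp]:
  "msum r c m f \<in> carrier_mat r c" "dim_row (msum r c m f) = r" "dim_col (msum r c m f) = c"
  unfolding msum_def by auto

lemma msum_index [simp]:
  "a < r \<Longrightarrow> b < c \<Longrightarrow> msum r c m f $$ (a, b) = (\<Sum>i<m. f i $$ (a, b))"
  unfolding msum_def by auto

lemma msum_cong: "(\<And>i. i < m \<Longrightarrow> f i = g i) \<Longrightarrow> msum r c m f = msum r c m g"
  unfolding msum_def by (intro arg_cong[where f = "mat r c"] ext) (auto intro: sum.cong)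

lemma msum_add:
  assumes "\<forall>i<m. f i \<in> carrier_mat r c" "\<forall>i<m. g i \<in> carrier_mat r c"
  shows "msum r c m (\<lambda>i. f i + g i) = msum r c m f + msum r c m g"
proof (rule eq_matI)
  fix a b assume "a < dim_row (msum r c m f + msum r c m g)" "b < dim_col (msum r c m f + msum r c m g)"
  moreover have "(f i + g i) $$ (a, b) = f i $$ (a, b) + g i $$ (a, b)" if "i < m" "a < r" "b < c" for i
    using assms that by auto
  ultimately show "msum r c m (\<lambda>i. f i + g i) $$ (a, b) = (msum r c m f + msum r c m g) $$ (a, b)"
    by (simp add: sum.distrib)
qed simp_all

lemma msum_minus:
  assumes "\<forall>i<m. f i \<in> carrier_mat r c" "\<forall>i<m. g i \<in> carrier_mat r c"
  shows "msum r c m (\<lambda>i. f i - g i) = msum r c m f - msum r c m g"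
proof (rule eq_matI)
  fix a b assume "a < dim_row (msum r c m f - msum r c m g)" "b < dim_col (msum r c m f - msum r c m g)"
  moreover have "(f i - g i) $$ (a, b) = f i $$ (a, b) - g i $$ (a, b)" if "i < m" "a < r" "b < c" for i
    using assms that by auto
  ultimately show "msum r c m (\<lambda>i. f i - g i) $$ (a, b) = (msum r c m f - msum r c m g) $$ (a, b)"
    by (simp add: sum_subtractf)
qed simp_all

lemma msum_smult:
  assumes "\<forall>i<m. f i \<in> carrier_mat r c"
  shows "msum r c m (\<lambda>i. x \<cdot>\<^sub>m f i) = x \<cdot>\<^sub>m msum r c m f"
proof (rule eq_matI)
  fix a b assume "a < dim_row (x \<cdot>\<^sub>m msum r c m f)" "b < dim_col (x \<cdot>\<^sub>m msum r c m f)"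
  moreover have "(x \<cdot>\<^sub>m f i) $$ (a, b) = x * f i $$ (a, b)" if "i < m" "a < r" "b < c" for i
    using assms that by auto
  ultimately show "msum r c m (\<lambda>i. x \<cdot>\<^sub>m f i) $$ (a, b) = (x \<cdot>\<^sub>m msum r c m f) $$ (a, b)"
    by (simp add: sum_distrib_left)
qed simp_all

lemma msum_zero [simp]: "msum r c m (\<lambda>i. 0\<^sub>m r c) = 0\<^sub>m r c"
  by (rule eq_matI) simp_all

lemma index_mult_sum:
  assumes "(A :: complex mat) \<in> carrier_mat q r" "B \<in> carrier_mat r c" "a < q" "b < c"
  shows "(A * B) $$ (a, b) = (\<Sum>j<r. A $$ (a, j) * B $$ (j, b))"
  using assms by (simp add: scalar_prod_def lessThan_atLeast0)

lemma msum_mult_left: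
  assumes f: "\<forall>i<m. f i \<in> carrier_mat r c" and A: "(A :: complex mat) \<in> carrier_mat q r"
  shows "A * msum r c m f = msum q c m (\<lambda>i. A * f i)"
proof (rule eq_matI)
  fix a b assume "a < dim_row (msum q c m (\<lambda>i. A * f i))" "b < dim_col (msum q c m (\<lambda>i. A * f i))"
  hence ab: "a < q" "b < c" by simp_all
  have "(A * msum r c m f) $$ (a, b) = (\<Sum>j<r. A $$ (a, j) * (\<Sum>i<m. f i $$ (j, b)))"
    using ab by (simp add: index_mult_sum[OF A msum_carrier(1) ab])
  also have "\<dots> = (\<Sum>i<m. \<Sum>j<r. A $$ (a, j) * f i $$ (j, b))"
    unfolding sum_distrib_left by (rule sum.swap)
  also have "\<dots> = msum q c m (\<lambda>i. A * f i) $$ (a, b)"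
    using ab f by (simp add: index_mult_sum[OF A _ ab])
  finally show "(A * msum r c m f) $$ (a, b) = msum q c m (\<lambda>i. A * f i) $$ (a, b)" .
qed (use A in simp_all)

lemma msum_mult_right:
  assumes f: "\<forall>i<m. f i \<in> carrier_mat r c" and A: "(A :: complex mat) \<in> carrier_mat c q"
  shows "msum r c m f * A = msum r q m (\<lambda>i. f i * A)"
proof (rule eq_matI)
  fix a b assume "a < dim_row (msum r q m (\<lambda>i. f i * A))" "b < dim_col (msum r q m (\<lambda>i. f i * A))"
  hence ab: "a < r" "b < q" by simp_all
  have "(msum r c m f * A) $$ (a, b) = (\<Sum>j<c. (\<Sum>i<m. f i $$ (a, j)) * A $$ (j, b))"
    using ab by (simp add: index_mult_sum[OF msum_carrier(1) A ab])
  also have "\<dots> = (\<Sum>i<m. \<Sum>j<c. f i $$ (a, j) * A $$ (j, b))"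
    unfolding sum_distrib_right by (rule sum.swap)
  also have "\<dots> = msum r q m (\<lambda>i. f i * A) $$ (a, b)"
    using ab f by (simp add: index_mult_sum[OF _ A ab])
  finally show "(msum r c m f * A) $$ (a, b) = msum r q m (\<lambda>i. f i * A) $$ (a, b)" .
qed (use A in simp_all)

lemma adj_msum:
  assumes "\<forall>i<m. f i \<in> carrier_mat r c"
  shows "mat_adjoint (msum r c m f) = msum c r m (\<lambda>i. mat_adjoint (f i))"
proof (rule eq_matI)
  fix a b assume "a < dim_row (msum c r m (\<lambda>i. mat_adjoint (f i)))" "b < dim_col (msum c r m (\<lambda>i. mat_adjoint (f i)))"
  moreover have "mat_adjoint (f i) $$ (a, b) = cnj (f i $$ (b, a))" if "i < m" "a < c" "b < r" for i
    using assms that by auto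
  ultimately show "mat_adjoint (msum r c m f) $$ (a, b) = msum c r m (\<lambda>i. mat_adjoint (f i)) $$ (a, b)"
    by simp
qed simp_all

definition cross_op :: "nat \<Rightarrow> nat \<Rightarrow> (nat \<Rightarrow> complex mat) \<Rightarrow> (nat \<Rightarrow> complex mat) \<Rightarrow> complex mat" where
  "cross_op m d X Y = msum d d m (\<lambda>i. mat_adjoint (X i) * Y i)"

lemma cross_op_carrier [simp]: "cross_op m d X Y \<in> carrier_mat d d"
  unfolding cross_op_def by simp

lemma rs_op_cross_op: "rs_op m d X = cross_op m d X X"
  unfolding rs_op_def cross_op_def msum_def by simp

lemma is_dual_cross_op: "is_dual m k d V W \<longleftrightarrow> is_RS m k d W \<and> cross_op m d W V = 1\<^sub>m d"
  unfolding is_dual_def cross_op_def msum_def by simp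

lemma cross_term_carrier:
  "is_system m k d X \<Longrightarrow> is_system m k d Y \<Longrightarrow> \<forall>i<m. mat_adjoint (X i) * Y i \<in> carrier_mat d d"
  unfolding is_system_def by (metis adj_carrier mult_carrier_mat)

lemma is_systemD: "is_system m k d X \<Longrightarrow> i < m \<Longrightarrow> X i \<in> carrier_mat (k i) d"
  unfolding is_system_def by simp

lemma is_system_add [simp]:
  "is_system m k d X \<Longrightarrow> is_system m k d Y \<Longrightarrow> is_system m k d (\<lambda>i. X i + Y i)"
  unfolding is_system_def by simp

lemma is_system_minus [simp]:
  "is_system m k d X \<Longrightarrow> is_system m k d Y \<Longrightarrow> is_system m k d (\<lambda>i. X i - Y i)"
  unfolding is_system_def by (simp add: minus_carrier_mat)

lemma is_system_smult [simp]:
  "is_system m k d X \<Longrightarrow> is_system m k d (\<lambda>i. c \<cdot>\<^sub>m X i)"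
  unfolding is_system_def by simp

lemma is_system_mult [simp]:
  "is_system m k d X \<Longrightarrow> P \<in> carrier_mat d n \<Longrightarrow> is_system m k n (\<lambda>i. X i * P)"
  unfolding is_system_def by (blast intro: mult_carrier_mat)

lemma cross_op_adjoint:
  assumes "is_system m k d X" "is_system m k d Y"
  shows "mat_adjoint (cross_op m d X Y) = cross_op m d Y X"
proof -
  have "mat_adjoint (mat_adjoint (X i) * Y i) = mat_adjoint (Y i) * X i" if "i < m" for i
    using is_systemD[OF assms(1) that] is_systemD[OF assms(2) that] by (simp add: adj_mult[of _ d "k i" _ d])
  thus ?thesis unfolding cross_op_def adj_msum[OF cross_term_carrier[OF assms]] by (rule msum_cong)
qed

lemma cross_op_add_left:
  assumes X: "is_system m k d X" and Y: "is_system m k d Y" and U: "is_system m k d U"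
  shows "cross_op m d (\<lambda>i. X i + Y i) U = cross_op m d X U + cross_op m d Y U"
proof -
  have "mat_adjoint (X i + Y i) * U i = mat_adjoint (X i) * U i + mat_adjoint (Y i) * U i" if "i < m" for i
    using is_systemD[OF X that] is_systemD[OF Y that] is_systemD[OF U that]
    by (simp add: adj_add[of _ "k i" d] add_mult_distrib_mat[of _ d "k i"])
  thus ?thesis
    unfolding cross_op_def msum_add[OF cross_term_carrier[OF X U] cross_term_carrier[OF Y U], symmetric]
    by (rule msum_cong)
qed

lemma cross_op_minus_left:
  assumes X: "is_system m k d X" and Y: "is_system m k d Y" and U: "is_system m k d U"
  shows "cross_op m d (\<lambda>i. X i - Y i) U = cross_op m d X U - cross_op m d Y U"
proof -
  have "mat_adjoint (X i - Y i) * U i = mat_adjoint (X i) * U i - mat_adjoint (Y i) * U i" if "i < m" for i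
    using is_systemD[OF X that] is_systemD[OF Y that] is_systemD[OF U that]
    by (simp add: adj_minus[of _ "k i" d] minus_mult_distrib_mat[of _ d "k i"])
  thus ?thesis
    unfolding cross_op_def msum_minus[OF cross_term_carrier[OF X U] cross_term_carrier[OF Y U], symmetric]
    by (rule msum_cong)
qed

lemma cross_op_add_right:
  assumes X: "is_system m k d X" and U: "is_system m k d U" and Y: "is_system m k d Y"
  shows "cross_op m d X (\<lambda>i. U i + Y i) = cross_op m d X U + cross_op m d X Y"
proof -
  have "mat_adjoint (X i) * (U i + Y i) = mat_adjoint (X i) * U i + mat_adjoint (X i) * Y i" if "i < m" for i
    using is_systemD[OF X that] is_systemD[OF Y that] is_systemD[OF U that] by (simp add: mult_add_distrib_mat[of _ d "k i"])
  thus ?thesis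
    unfolding cross_op_def msum_add[OF cross_term_carrier[OF X U] cross_term_carrier[OF X Y], symmetric]
    by (rule msum_cong)
qed

lemma cross_op_smult_left:
  assumes X: "is_system m k d X" and U: "is_system m k d U"
  shows "cross_op m d (\<lambda>i. complex_of_real c \<cdot>\<^sub>m X i) U = complex_of_real c \<cdot>\<^sub>m cross_op m d X U"
proof -
  have "mat_adjoint (complex_of_real c \<cdot>\<^sub>m X i) * U i = complex_of_real c \<cdot>\<^sub>m (mat_adjoint (X i) * U i)"
    if "i < m" for i
    using is_systemD[OF X that] is_systemD[OF U that]
    by (simp add: adj_smult_real mult_smult_assoc_mat[of _ d "k i"])
  thus ?thesis unfolding cross_op_def msum_smult[OF cross_term_carrier[OF X U], symmetric]
    by (rule msum_cong)
qed

lemma cross_op_smult_right: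
  assumes X: "is_system m k d X" and U: "is_system m k d U"
  shows "cross_op m d X (\<lambda>i. c \<cdot>\<^sub>m U i) = c \<cdot>\<^sub>m cross_op m d X U"
proof -
  have "mat_adjoint (X i) * (c \<cdot>\<^sub>m U i) = c \<cdot>\<^sub>m (mat_adjoint (X i) * U i)" if "i < m" for i
    using is_systemD[OF X that] is_systemD[OF U that] by (simp add: mult_smult_distrib[of _ d "k i"])
  thus ?thesis unfolding cross_op_def msum_smult[OF cross_term_carrier[OF X U], symmetric]
    by (rule msum_cong)
qed

lemma cross_op_mult_right:
  assumes X: "is_system m k d X" and U: "is_system m k d U" and P: "P \<in> carrier_mat d d"
  shows "cross_op m d X (\<lambda>i. U i * P) = cross_op m d X U * P"
proof -
  have "mat_adjoint (X i) * (U i * P) = mat_adjoint (X i) * U i * P" if "i < m" for i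
    using is_systemD[OF X that] is_systemD[OF U that] P by (simp add: assoc_mult_mat[of _ d "k i" _ d _ d])
  thus ?thesis unfolding cross_op_def msum_mult_right[OF cross_term_carrier[OF X U] P]
    by (rule msum_cong)
qed

lemma cross_op_mult_left:
  assumes X: "is_system m k d X" and U: "is_system m k d U" and P: "P \<in> carrier_mat d d"
  shows "cross_op m d (\<lambda>i. X i * P) U = mat_adjoint P * cross_op m d X U"
proof -
  have "cross_op m d (\<lambda>i. X i * P) U = mat_adjoint (cross_op m d U (\<lambda>i. X i * P))"
    using X U P by (simp add: cross_op_adjoint)
  also have "\<dots> = mat_adjoint P * cross_op m d X U"
    using X U P by (simp add: cross_op_mult_right adj_mult[of _ d d _ d] cross_op_adjoint)
  finally show ?thesis .
qed

lemma mtrace_msum: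
  assumes "\<forall>i<m. f i \<in> carrier_mat r r"
  shows "mtrace (msum r r m f) = (\<Sum>i<m. mtrace (f i))"
proof -
  have "mtrace (msum r r m f) = (\<Sum>a<r. \<Sum>i<m. f i $$ (a, a))" unfolding mtrace_def by simp
  also have "\<dots> = (\<Sum>i<m. \<Sum>a<r. f i $$ (a, a))" by (rule sum.swap)
  also have "\<dots> = (\<Sum>i<m. mtrace (f i))"
    using assms unfolding mtrace_def carrier_mat_def by (intro sum.cong refl) auto
  finally show ?thesis .
qed

lemma mtrace_add:
  "(A :: complex mat) \<in> carrier_mat r r \<Longrightarrow> B \<in> carrier_mat r r \<Longrightarrow> mtrace (A + B) = mtrace A + mtrace B"
  unfolding mtrace_def by (simp add: sum.distrib)

lemma mtrace_smult: "(A :: complex mat) \<in> carrier_mat r r \<Longrightarrow> mtrace (x \<cdot>\<^sub>m A) = x * mtrace A"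
  unfolding mtrace_def by (simp add: sum_distrib_left)

lemma mtrace_comm:
  assumes A: "(A :: complex mat) \<in> carrier_mat r c" and B: "B \<in> carrier_mat c r"
  shows "mtrace (A * B) = mtrace (B * A)"
proof -
  have "mtrace (A * B) = (\<Sum>a<r. (A * B) $$ (a, a))" using A by (simp add: mtrace_def)
  also have "\<dots> = (\<Sum>a<r. \<Sum>j<c. A $$ (a, j) * B $$ (j, a))"
    by (intro sum.cong refl, rule index_mult_sum[OF A B]) auto
  also have "\<dots> = (\<Sum>j<c. \<Sum>a<r. B $$ (j, a) * A $$ (a, j))"
    by (subst sum.swap) (simp add: mult.commute)
  also have "\<dots> = (\<Sum>j<c. (B * A) $$ (j, j))"
    by (intro sum.cong refl, rule index_mult_sum[OF B A, symmetric]) auto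
  also have "\<dots> = mtrace (B * A)" using B by (simp add: mtrace_def)
  finally show ?thesis .
qed

lemma frob_norm_sq: "(frob_norm A)\<^sup>2 = (\<Sum>a<dim_row A. \<Sum>b<dim_col A. (cmod (A $$ (a, b)))\<^sup>2)"
  unfolding frob_norm_def by (simp add: sum_nonneg)

lemma frob_norm_nonneg: "frob_norm A \<ge> 0"
  unfolding frob_norm_def by (simp add: sum_nonneg)

lemma mtrace_adjoint_self: "mtrace (mat_adjoint (A :: complex mat) * A) = complex_of_real ((frob_norm A)\<^sup>2)"
proof -
  have A: "A \<in> carrier_mat (dim_row A) (dim_col A)" by auto
  have "mtrace (mat_adjoint A * A) = (\<Sum>b<dim_col A. (mat_adjoint A * A) $$ (b, b))"
    unfolding mtrace_def by simp
  also have "\<dots> = (\<Sum>b<dim_col A. \<Sum>a<dim_row A. cnj (A $$ (a, b)) * A $$ (a, b))"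
    by (intro sum.cong refl, subst index_mult_sum[OF adj_carrier[OF A] A]) auto
  also have "\<dots> = (\<Sum>a<dim_row A. \<Sum>b<dim_col A. complex_of_real ((cmod (A $$ (a, b)))\<^sup>2))"
    by (subst sum.swap) (simp only: complex_norm_square mult.commute)
  finally show ?thesis unfolding frob_norm_sq by simp
qed

lemma frob_norm_eq_0_iff:
  assumes A: "(A :: complex mat) \<in> carrier_mat r c"
  shows "frob_norm A = 0 \<longleftrightarrow> A = 0\<^sub>m r c"
proof
  assume "frob_norm A = 0"
  hence "\<forall>a\<in>{..<r}. \<forall>b\<in>{..<c}. (cmod (A $$ (a, b)))\<^sup>2 = 0"
    using A unfolding frob_norm_def by (simp add: sum_nonneg_eq_0_iff sum_nonneg)
  thus "A = 0\<^sub>m r c" using A by (intro eq_matI) auto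
qed (simp add: frob_norm_def)

lemma frob_norm_smult: "frob_norm (complex_of_real x \<cdot>\<^sub>m (A :: complex mat)) = \<bar>x\<bar> * frob_norm A"
proof -
  have "(frob_norm (complex_of_real x \<cdot>\<^sub>m A))\<^sup>2 = (\<bar>x\<bar> * frob_norm A)\<^sup>2"
    unfolding frob_norm_sq power_mult_distrib
    by (simp add: norm_mult power_mult_distrib sum_distrib_left)
  thus ?thesis using frob_norm_nonneg[of A] frob_norm_nonneg[of "complex_of_real x \<cdot>\<^sub>m A"]
    by simp
qed

lemma rs_op_carrier [simp]: "rs_op m d X \<in> carrier_mat d d"
  unfolding rs_op_cross_op by simp

lemma trace_rs_op:
  assumes "is_system m k n X"
  shows "mtrace (rs_op m n X) = complex_of_real (\<Sum>j<m. (frob_norm (X j))\<^sup>2)"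
  unfolding rs_op_cross_op cross_op_def mtrace_msum[OF cross_term_carrier[OF assms assms]]
  by (simp add: mtrace_adjoint_self)

lemma rs_op_trace_zero:
  assumes X: "is_system m k n X" and tr: "mtrace (rs_op m n X) = 0" and j: "j < m"
  shows "X j = 0\<^sub>m (k j) n"
proof -
  have "(\<Sum>j<m. (frob_norm (X j))\<^sup>2) = 0" using tr unfolding trace_rs_op[OF X] of_real_eq_0_iff .
  hence "frob_norm (X j) = 0" using j by (simp add: sum_nonneg_eq_0_iff)
  thus ?thesis using frob_norm_eq_0_iff[OF is_systemD[OF X j]] by simp
qed

(* Conjugating S_V by a (possibly rectangular) matrix P gives the RS operator of (V_j P)_j;
   this is the positive semidefiniteness of S_V in a form convenient for traces. *)
lemma rs_op_sandwich:
  assumes V: "is_system m k d V" and P: "P \<in> carrier_mat d n"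
  shows "mat_adjoint P * rs_op m d V * P = rs_op m n (\<lambda>j. V j * P)"
proof -
  have VV: "\<forall>j<m. mat_adjoint (V j) * V j \<in> carrier_mat d d"
    using cross_term_carrier[OF V V] .
  have PVV: "\<forall>j<m. mat_adjoint P * (mat_adjoint (V j) * V j) \<in> carrier_mat n d"
    using VV P by (blast intro: mult_carrier_mat adj_carrier)
  have "mat_adjoint P * (mat_adjoint (V j) * V j) * P = mat_adjoint (V j * P) * (V j * P)" if "j < m" for j
  proof -
    have Vj: "V j \<in> carrier_mat (k j) d" using is_systemD[OF V that] .
    have "mat_adjoint P * (mat_adjoint (V j) * V j) * P = (mat_adjoint P * mat_adjoint (V j)) * V j * P"
      using Vj P by (simp add: assoc_mult_mat[symmetric, of _ n d _ "k j"])
    also have "\<dots> = (mat_adjoint P * mat_adjoint (V j)) * (V j * P)"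
      using Vj P by (intro assoc_mult_mat[of _ n "k j" _ d _ n]) auto
    finally show ?thesis using Vj P by (simp add: adj_mult)
  qed
  hence "msum n n m (\<lambda>j. mat_adjoint P * (mat_adjoint (V j) * V j) * P) = rs_op m n (\<lambda>j. V j * P)"
    unfolding rs_op_cross_op cross_op_def by (rule msum_cong)
  thus ?thesis unfolding rs_op_cross_op cross_op_def
    by (simp add: msum_mult_left[OF VV adj_carrier[OF P]] msum_mult_right[OF PVV P])
qed

lemma rs_op_hermitian: "is_system m k d X \<Longrightarrow> mat_adjoint (rs_op m d X) = rs_op m d X"
  unfolding rs_op_cross_op by (rule cross_op_adjoint)

lemma rs_op_kernel:
  assumes W: "is_system m k d W" and X: "X \<in> carrier_mat d n" and RX: "rs_op m d W * X = 0\<^sub>m d n"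
  shows "\<forall>j<m. W j * X = 0\<^sub>m (k j) n"
proof -
  have "rs_op m n (\<lambda>j. W j * X) = mat_adjoint X * rs_op m d W * X"
    by (rule rs_op_sandwich[OF W X, symmetric])
  also have "\<dots> = mat_adjoint X * (rs_op m d W * X)"
    using X by (intro assoc_mult_mat) auto
  also have "\<dots> = 0\<^sub>m n n" using X RX by simp
  finally have "mtrace (rs_op m n (\<lambda>j. W j * X)) = 0" unfolding mtrace_def by simp
  thus ?thesis using rs_op_trace_zero[OF is_system_mult[OF W X]] by blast
qed

(* A singular square matrix annihilates a nonzero square matrix (all of whose columns are
   a kernel vector). *)
lemma det_zero_right_annihilator:
  assumes R: "(R :: complex mat) \<in> carrier_mat d d" and "det R = 0"
  obtains X where "X \<in> carrier_mat d d" "X \<noteq> 0\<^sub>m d d" "R * X = 0\<^sub>m d d"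
proof -
  obtain x where x: "x \<in> carrier_vec d" "x \<noteq> 0\<^sub>v d" "R *\<^sub>v x = 0\<^sub>v d"
    using det_0_iff_vec_prod_zero[OF R] \<open>det R = 0\<close> by blast
  define X :: "complex mat" where "X = mat d d (\<lambda>(a, b). x $ a)"
  have X: "X \<in> carrier_mat d d" unfolding X_def by simp
  have "R * X = 0\<^sub>m d d"
  proof (rule eq_matI)
    fix a b assume ab: "a < dim_row (0\<^sub>m d d :: complex mat)" "b < dim_col (0\<^sub>m d d :: complex mat)"
    have "col X b = x" unfolding X_def using x(1) ab by (intro eq_vecI) auto
    hence "(R * X) $$ (a, b) = (R *\<^sub>v x) $ a" using ab R X by simp
    thus "(R * X) $$ (a, b) = 0\<^sub>m d d $$ (a, b)" using ab x(3) by simp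
  qed (use R X in simp_all)
  moreover have "X \<noteq> 0\<^sub>m d d"
  proof
    assume X0: "X = 0\<^sub>m d d"
    have "x $ a = X $$ (a, a)" if "a < d" for a unfolding X_def using that by simp
    hence "x = 0\<^sub>v d" using x(1) X0 by (intro eq_vecI) auto
    with x(2) show False by simp
  qed
  ultimately show ?thesis using X that by blast
qed

lemma det_nonzero_invertible:
  assumes R: "(R :: complex mat) \<in> carrier_mat d d" and "det R \<noteq> 0"
  shows "invertible_mat R"
proof -
  from det_non_zero_imp_unit[OF assms, of "()"]
  obtain B where "B \<in> carrier_mat d d" "R * B = 1\<^sub>m d" "B * R = 1\<^sub>m d"
    unfolding Units_def ring_mat_def by auto
  with R show ?thesis unfolding invertible_mat_def inverts_mat_def by auto
qed

(* Any dual of a system is automatically a reconstruction system: if S_W X = 0 then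
   W_j X = 0 for all j, hence X = (sum_j V_j^* W_j) X = 0. *)
lemma dual_is_RS:
  assumes V: "is_system m k d V" and W: "is_system m k d W" and dual: "cross_op m d W V = 1\<^sub>m d"
  shows "invertible_mat (rs_op m d W)"
proof (rule det_nonzero_invertible[OF rs_op_carrier], rule notI)
  assume "det (rs_op m d W) = 0"
  then obtain X where X: "X \<in> carrier_mat d d" "X \<noteq> 0\<^sub>m d d" "rs_op m d W * X = 0\<^sub>m d d"
    using det_zero_right_annihilator[OF rs_op_carrier] by blast
  have WX: "\<forall>j<m. W j * X = 0\<^sub>m (k j) d" using rs_op_kernel[OF W X(1,3)] .
  have "cross_op m d V W = 1\<^sub>m d" using cross_op_adjoint[OF W V] dual by simp
  hence "X = cross_op m d V W * X" using X by simp
  also have "\<dots> = cross_op m d V (\<lambda>j. W j * X)" by (rule cross_op_mult_right[OF V W X(1), symmetric])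
  also have "\<dots> = msum d d m (\<lambda>j. 0\<^sub>m d d)"
  proof -
    have "mat_adjoint (V j) * (W j * X) = 0\<^sub>m d d" if "j < m" for j
      using WX is_systemD[OF V that] that by simp
    thus ?thesis unfolding cross_op_def by (rule msum_cong)
  qed
  finally show False using X(2) by simp
qed

lemma rs_inv:
  assumes V: "is_system m k d V" and inv: "invertible_mat (rs_op m d V)"
  shows "rs_inv m d V \<in> carrier_mat d d" "rs_op m d V * rs_inv m d V = 1\<^sub>m d"
    "rs_inv m d V * rs_op m d V = 1\<^sub>m d" "mat_adjoint (rs_inv m d V) = rs_inv m d V"
proof -
  define S where "S = rs_op m d V"
  have S: "S \<in> carrier_mat d d" unfolding S_def by simp
  from inv obtain B where B: "S * B = 1\<^sub>m (dim_row S)" "B * S = 1\<^sub>m (dim_row B)"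
    unfolding S_def[symmetric] invertible_mat_def inverts_mat_def by blast
  have "B \<in> carrier_mat d d"
    using arg_cong[OF B(1), of dim_col] arg_cong[OF B(2), of dim_col] S by auto
  hence "S \<in> Units (ring_mat TYPE(complex) d ())"
    unfolding Units_def ring_mat_def using S B by auto
  then obtain Si where Si: "mat_inverse S = Some Si"
    using mat_inverse(1)[OF S, where b = "()"] by (cases "mat_inverse S") auto
  have e: "rs_inv m d V = Si" unfolding rs_inv_def S_def[symmetric] Si by simp
  have r: "S * Si = 1\<^sub>m d" "Si * S = 1\<^sub>m d" "Si \<in> carrier_mat d d"
    using mat_inverse(2)[OF S Si] by auto
  show "rs_inv m d V \<in> carrier_mat d d" "rs_op m d V * rs_inv m d V = 1\<^sub>m d"
    "rs_inv m d V * rs_op m d V = 1\<^sub>m d" using r e S_def by auto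
  have "mat_adjoint Si * S = 1\<^sub>m d"
    using adj_mult[OF S r(3)] r(1) rs_op_hermitian[OF V] unfolding S_def[symmetric] by simp
  hence "mat_adjoint Si = mat_adjoint Si * (S * Si)" using r by simp
  also have "\<dots> = (mat_adjoint Si * S) * Si" using r S by (simp add: assoc_mult_mat[of _ d d _ d _ d])
  also have "\<dots> = Si" using \<open>mat_adjoint Si * S = 1\<^sub>m d\<close> r by simp
  finally show "mat_adjoint (rs_inv m d V) = rs_inv m d V" using e by simp
qed

lemma canonical_dual_system:
  "is_system m k d V \<Longrightarrow> invertible_mat (rs_op m d V) \<Longrightarrow> is_system m k d (canonical_dual m d V)"
  unfolding canonical_dual_def by (simp add: rs_inv(1))

lemma cross_op_canonical_dual:
  assumes V: "is_system m k d V" and inv: "invertible_mat (rs_op m d V)" and U: "is_system m k d U"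
  shows "cross_op m d (canonical_dual m d V) U = rs_inv m d V * cross_op m d V U"
  using cross_op_mult_left[OF V U rs_inv(1)[OF V inv]] rs_inv(4)[OF V inv]
  unfolding canonical_dual_def by simp

lemma canonical_dual_is_dual:
  assumes V: "is_system m k d V" and inv: "invertible_mat (rs_op m d V)"
  shows "cross_op m d (canonical_dual m d V) V = 1\<^sub>m d"
  using cross_op_canonical_dual[OF V inv V] rs_inv(3)[OF V inv] by (simp add: rs_op_cross_op)

lemma rs_op_canonical_dual:
  assumes V: "is_system m k d V" and inv: "invertible_mat (rs_op m d V)"
  shows "rs_op m d (canonical_dual m d V) = rs_inv m d V"
proof -
  have "rs_op m d (canonical_dual m d V) = cross_op m d (canonical_dual m d V) V * rs_inv m d V"
    unfolding rs_op_cross_op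
    by (subst (2) canonical_dual_def) (rule cross_op_mult_right[OF canonical_dual_system[OF V inv] V rs_inv(1)[OF V inv]])
  thus ?thesis using canonical_dual_is_dual[OF V inv] rs_inv(1)[OF V inv] by simp
qed

lemma dual_minus_canonical_dual:
  assumes V: "is_system m k d V" and inv: "invertible_mat (rs_op m d V)"
    and W: "is_system m k d W" and dual: "cross_op m d W V = 1\<^sub>m d"
  shows "is_system m k d (\<lambda>i. W i - canonical_dual m d V i)"
    and "cross_op m d (\<lambda>i. W i - canonical_dual m d V i) V = 0\<^sub>m d d"
proof -
  show "is_system m k d (\<lambda>i. W i - canonical_dual m d V i)"
    using W canonical_dual_system[OF V inv] by simp
  show "cross_op m d (\<lambda>i. W i - canonical_dual m d V i) V = 0\<^sub>m d d"
    unfolding cross_op_minus_left[OF W canonical_dual_system[OF V inv] V]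
    using dual canonical_dual_is_dual[OF V inv] by simp
qed

(* tr (S_X S_Z) >= 0: each summand tr (S_X Z_j^* Z_j) equals the trace of Z_j S_X Z_j^*,
   which is an RS operator by the sandwich lemma. *)
lemma trace_rs_op_mult_nonneg:
  assumes X: "is_system m k d X" and Z: "is_system m k d Z"
  shows "0 \<le> Re (mtrace (rs_op m d X * rs_op m d Z))"
proof -
  define S where "S = rs_op m d X"
  have S: "S \<in> carrier_mat d d" unfolding S_def by simp
  have summand: "0 \<le> Re (mtrace (S * (mat_adjoint (Z j) * Z j)))" if "j \<in> {..<m}" for j
  proof -
    have Zj: "Z j \<in> carrier_mat (k j) d" using is_systemD[OF Z] that by simp
    have "mtrace (S * (mat_adjoint (Z j) * Z j)) = mtrace ((S * mat_adjoint (Z j)) * Z j)"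
      using S Zj by (simp add: assoc_mult_mat[of _ d d _ "k j" _ d])
    also have "\<dots> = mtrace (Z j * (S * mat_adjoint (Z j)))"
      using S Zj by (intro mtrace_comm[of _ d "k j"]) auto
    also have "\<dots> = mtrace (mat_adjoint (mat_adjoint (Z j)) * S * mat_adjoint (Z j))"
      using S Zj by (simp add: assoc_mult_mat[of _ "k j" d _ d _ "k j"])
    also have "\<dots> = mtrace (rs_op m (k j) (\<lambda>i. X i * mat_adjoint (Z j)))"
      unfolding S_def using rs_op_sandwich[OF X adj_carrier[OF Zj]] by simp
    also have "\<dots> = complex_of_real (\<Sum>i<m. (frob_norm (X i * mat_adjoint (Z j)))\<^sup>2)"
      by (rule trace_rs_op[OF is_system_mult[OF X adj_carrier[OF Zj]]])
    finally show ?thesis by (simp add: sum_nonneg)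
  qed
  have "mtrace (S * rs_op m d Z) = (\<Sum>j<m. mtrace (S * (mat_adjoint (Z j) * Z j)))"
    unfolding rs_op_cross_op cross_op_def msum_mult_left[OF cross_term_carrier[OF Z Z] S]
    using cross_term_carrier[OF Z Z] S by (subst mtrace_msum) auto
  moreover have "0 \<le> (\<Sum>j<m. Re (mtrace (S * (mat_adjoint (Z j) * Z j))))"
    by (rule sum_nonneg) (rule summand)
  ultimately show ?thesis unfolding S_def[symmetric] by simp
qed

(* tr (S_Z^2) = ||S_Z||^2 > 0 unless Z = 0. *)
lemma trace_rs_op_sq_pos:
  assumes Z: "is_system m k d Z" and i: "i < m" and Zi: "Z i \<noteq> 0\<^sub>m (k i) d"
  shows "0 < Re (mtrace (rs_op m d Z * rs_op m d Z))"
proof -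
  have "rs_op m d Z \<noteq> 0\<^sub>m d d"
    using rs_op_trace_zero[OF Z _ i] Zi unfolding mtrace_def by auto
  hence "frob_norm (rs_op m d Z) \<noteq> 0" using frob_norm_eq_0_iff[OF rs_op_carrier] by blast
  moreover have "mtrace (rs_op m d Z * rs_op m d Z) = complex_of_real ((frob_norm (rs_op m d Z))\<^sup>2)"
    using mtrace_adjoint_self[of "rs_op m d Z"] rs_op_hermitian[OF Z] by simp
  ultimately show ?thesis by simp
qed

lemma smult_smult_mat: "(a :: complex) \<cdot>\<^sub>m (b \<cdot>\<^sub>m M) = (a * b) \<cdot>\<^sub>m M"
  by (rule eq_matI) auto

lemma trace_square_expand:
  assumes A: "(A :: complex mat) \<in> carrier_mat d d" and B: "B \<in> carrier_mat d d"
  shows "Re (mtrace ((A + complex_of_real r \<cdot>\<^sub>m B) * (A + complex_of_real r \<cdot>\<^sub>m B)))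
    = Re (mtrace (A * A)) + 2 * r * Re (mtrace (A * B)) + r\<^sup>2 * Re (mtrace (B * B))"
proof -
  define s where "s = complex_of_real r"
  have sB: "s \<cdot>\<^sub>m B \<in> carrier_mat d d" using B by simp
  have AsB: "A + s \<cdot>\<^sub>m B \<in> carrier_mat d d" using A sB by simp
  have "(A + s \<cdot>\<^sub>m B) * (A + s \<cdot>\<^sub>m B) = (A * A + A * (s \<cdot>\<^sub>m B)) + ((s \<cdot>\<^sub>m B) * A + (s \<cdot>\<^sub>m B) * (s \<cdot>\<^sub>m B))"
    by (simp only: add_mult_distrib_mat[OF A sB AsB] mult_add_distrib_mat[OF A A sB]
        mult_add_distrib_mat[OF sB A sB])
  also have "\<dots> = (A * A + s \<cdot>\<^sub>m (A * B)) + (s \<cdot>\<^sub>m (B * A) + (s * s) \<cdot>\<^sub>m (B * B))"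
    using A B by (simp add: mult_smult_distrib[OF A B] mult_smult_assoc_mat[OF B A]
        mult_smult_assoc_mat[OF B sB] mult_smult_distrib[OF B B] smult_smult_mat)
  finally have "mtrace ((A + s \<cdot>\<^sub>m B) * (A + s \<cdot>\<^sub>m B))
      = mtrace (A * A) + s * mtrace (A * B) + (s * mtrace (B * A) + (s * s) * mtrace (B * B))"
    using A B by (simp add: mtrace_add[of _ d] mtrace_smult[of _ d])
  also have "mtrace (B * A) = mtrace (A * B)" by (rule mtrace_comm[OF B A])
  finally show ?thesis unfolding s_def by (simp add: power2_eq_square algebra_simps)
qed

definition dual_path :: "nat \<Rightarrow> nat \<Rightarrow> (nat \<Rightarrow> complex mat) \<Rightarrow> (nat \<Rightarrow> complex mat) \<Rightarrow> real \<Rightarrow> nat \<Rightarrow> complex mat" where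
  "dual_path m d V Z t = (\<lambda>i. canonical_dual m d V i + complex_of_real t \<cdot>\<^sub>m Z i)"

lemma dual_path_one:
  assumes V: "is_system m k d V" and inv: "invertible_mat (rs_op m d V)"
    and W: "is_system m k d W" and i: "i < m"
  shows "dual_path m d V (\<lambda>i. W i - canonical_dual m d V i) 1 i = W i"
  using is_systemD[OF W i] is_systemD[OF canonical_dual_system[OF V inv] i]
  unfolding dual_path_def by (intro eq_matI) auto

(* From now on Z is orthogonal to V in the sense sum_i Z_i^* V_i = 0, which is exactly the
   condition for every W_t to be a dual of V. *)
context
  fixes m d :: nat and k :: "nat \<Rightarrow> nat" and V Z :: "nat \<Rightarrow> complex mat"
  assumes V: "is_system m k d V" and inv: "invertible_mat (rs_op m d V)"
    and Z: "is_system m k d Z" and orth: "cross_op m d Z V = 0\<^sub>m d d"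
begin

private lemma Vd: "is_system m k d (canonical_dual m d V)"
  by (rule canonical_dual_system[OF V inv])

private lemma tZ: "is_system m k d (\<lambda>i. complex_of_real t \<cdot>\<^sub>m Z i)"
  using Z by simp

lemma dual_path_system: "is_system m k d (dual_path m d V Z t)"
  unfolding dual_path_def using Vd tZ by simp

lemma cross_op_canonical_dual_orth:
  "cross_op m d (canonical_dual m d V) Z = 0\<^sub>m d d" "cross_op m d Z (canonical_dual m d V) = 0\<^sub>m d d"
proof -
  have VZ: "cross_op m d V Z = 0\<^sub>m d d" using cross_op_adjoint[OF Z V] orth by simp
  show "cross_op m d (canonical_dual m d V) Z = 0\<^sub>m d d"
    using cross_op_canonical_dual[OF V inv Z] VZ rs_inv(1)[OF V inv] by simp
  show "cross_op m d Z (canonical_dual m d V) = 0\<^sub>m d d"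
    using cross_op_mult_right[OF Z V rs_inv(1)[OF V inv]] orth rs_inv(1)[OF V inv]
    unfolding canonical_dual_def by simp
qed

lemma dual_path_is_dual: "cross_op m d (dual_path m d V Z t) V = 1\<^sub>m d"
  unfolding dual_path_def cross_op_add_left[OF Vd tZ V] cross_op_smult_left[OF Z V]
  using canonical_dual_is_dual[OF V inv] orth by simp

lemma dual_path_DRS: "is_Pv m k d v V \<Longrightarrow> is_DRS m k d v V (dual_path m d V Z t)"
  unfolding is_DRS_def is_dual_cross_op is_RS_def
  using dual_path_system dual_path_is_dual dual_is_RS[OF V dual_path_system] by simp

(* All cross terms vanish, so S_{W_t} = S_V^{-1} + t^2 S_Z. *)
lemma rs_op_dual_path:
  "rs_op m d (dual_path m d V Z t) = rs_inv m d V + complex_of_real (t\<^sup>2) \<cdot>\<^sub>m rs_op m d Z"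
proof -
  let ?c = "complex_of_real t"
  have "rs_op m d (dual_path m d V Z t)
      = (rs_op m d (canonical_dual m d V) + cross_op m d (canonical_dual m d V) (\<lambda>i. ?c \<cdot>\<^sub>m Z i))
        + (cross_op m d (\<lambda>i. ?c \<cdot>\<^sub>m Z i) (canonical_dual m d V) + cross_op m d (\<lambda>i. ?c \<cdot>\<^sub>m Z i) (\<lambda>i. ?c \<cdot>\<^sub>m Z i))"
    unfolding rs_op_cross_op dual_path_def cross_op_add_left[OF Vd tZ dual_path_system[unfolded dual_path_def]]
      cross_op_add_right[OF Vd Vd tZ] cross_op_add_right[OF tZ Vd tZ] ..
  also have "\<dots> = rs_inv m d V + complex_of_real (t\<^sup>2) \<cdot>\<^sub>m rs_op m d Z"
    using rs_inv(1)[OF V inv]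
    by (simp add: rs_op_canonical_dual[OF V inv, unfolded rs_op_cross_op] cross_op_smult_right[OF Vd Z] cross_op_smult_left[OF Z Vd]
        cross_op_smult_left[OF Z tZ] cross_op_smult_right[OF Z Z] cross_op_canonical_dual_orth
        smult_smult_mat rs_op_cross_op power2_eq_square)
  finally show ?thesis .
qed

lemma FP_dual_path:
  "FP m d V (dual_path m d V Z t) = FP m d V (canonical_dual m d V)
     + 2 * t\<^sup>2 * Re (mtrace (rs_inv m d V * rs_op m d Z)) + (t\<^sup>2)\<^sup>2 * Re (mtrace (rs_op m d Z * rs_op m d Z))"
  unfolding FP_def rs_op_dual_path trace_square_expand[OF rs_inv(1)[OF V inv] rs_op_carrier]
    rs_op_canonical_dual[OF V inv] by simp

lemma FP_dual_path_decreasing: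
  assumes i: "i < m" and Zi: "Z i \<noteq> 0\<^sub>m (k i) d" and t: "0 \<le> t" "t < 1"
  shows "FP m d V (dual_path m d V Z t) < FP m d V (dual_path m d V Z 1)"
proof -
  have a: "0 \<le> Re (mtrace (rs_inv m d V * rs_op m d Z))"
    using trace_rs_op_mult_nonneg[OF Vd Z] by (simp add: rs_op_canonical_dual[OF V inv])
  have b: "0 < Re (mtrace (rs_op m d Z * rs_op m d Z))" by (rule trace_rs_op_sq_pos[OF Z i Zi])
  have "t\<^sup>2 \<le> 1" "t ^ 4 < 1" using t by (simp_all add: power_le_one power_less_one_iff)
  hence "t\<^sup>2 * Re (mtrace (rs_inv m d V * rs_op m d Z)) \<le> Re (mtrace (rs_inv m d V * rs_op m d Z))"
    and "t ^ 4 * Re (mtrace (rs_op m d Z * rs_op m d Z)) < Re (mtrace (rs_op m d Z * rs_op m d Z))"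
    using a b t by (simp_all add: mult_left_le_one_le)
  thus ?thesis unfolding FP_dual_path by simp
qed

lemma dP_dual_path:
  "dP m (dual_path m d V Z s) (dual_path m d V Z t) = \<bar>s - t\<bar> * sqrt (\<Sum>i<m. (frob_norm (Z i))\<^sup>2)"
proof -
  have "(frob_norm (dual_path m d V Z s i - dual_path m d V Z t i))\<^sup>2 = (s - t)\<^sup>2 * (frob_norm (Z i))\<^sup>2"
    if "i < m" for i
  proof -
    have "dual_path m d V Z s i - dual_path m d V Z t i = complex_of_real (s - t) \<cdot>\<^sub>m Z i"
      using is_systemD[OF Vd that] is_systemD[OF Z that] unfolding dual_path_def
      by (intro eq_matI) (auto simp: algebra_simps)
    thus ?thesis by (simp only: frob_norm_smult power_mult_distrib power2_abs)
  qed
  hence "(\<Sum>i<m. (frob_norm (dual_path m d V Z s i - dual_path m d V Z t i))\<^sup>2)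
      = (s - t)\<^sup>2 * (\<Sum>i<m. (frob_norm (Z i))\<^sup>2)"
    by (simp add: sum_distrib_left)
  thus ?thesis unfolding dP_def by (simp add: real_sqrt_mult)
qed

end

lemma FP_cong_right: "(\<And>i. i < m \<Longrightarrow> W i = W' i) \<Longrightarrow> FP m d V W = FP m d V W'"
  unfolding FP_def rs_op_def by simp

lemma dP_cong_left: "(\<And>i. i < m \<Longrightarrow> W i = W' i) \<Longrightarrow> dP m W U = dP m W' U"
  unfolding dP_def by simp

lemma dP_self: "dP m V V = 0"
  unfolding dP_def frob_norm_def by simp

lemma exists_param_near_one:
  assumes "(\<epsilon> :: real) > 0" "N \<ge> 0"
  obtains t where "0 \<le> t" "t < 1" "\<bar>1 - t\<bar> * N < \<epsilon>"
proof
  define \<delta> where "\<delta> = min (1/2) (\<epsilon> / (N + 1))"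
  have "0 < \<delta>" using assms unfolding \<delta>_def by simp
  moreover have "\<delta> \<le> 1/2" unfolding \<delta>_def by (rule min.cobounded1)
  ultimately
  show "0 \<le> 1 - \<delta>" "1 - \<delta> < 1" by auto
  have "\<delta> * N \<le> \<epsilon> / (N + 1) * N" using assms unfolding \<delta>_def by (intro mult_right_mono) auto
  also have "\<dots> < \<epsilon>" using assms by (simp add: field_simps)
  finally show "\<bar>1 - (1 - \<delta>)\<bar> * N < \<epsilon>" using \<open>0 < \<delta>\<close> by simp
qed

(* Otherwise
   Z = W - V^# is orthogonal to V and nonzero, and the dual path W_t with t slightly
   below 1 stays in DRS_v, is d_P-close to W, and has strictly smaller potential. *)
theorem lemma6p2:
  fixes m d :: nat and k :: "nat \<Rightarrow> nat" and v :: "nat \<Rightarrow> real"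
    and V W :: "nat \<Rightarrow> complex mat"
  assumes "m \<ge> 1" and "d \<ge> 1"
    and "\<forall>i<m. 1 \<le> k i \<and> k i \<le> d"
    and "\<forall>i<m. v i > 0"
    and "local_dP_minimizer m k d v V W"
  shows "\<forall>i<m. W i = canonical_dual m d V i"
proof (rule ccontr)
  assume "\<not> (\<forall>i<m. W i = canonical_dual m d V i)"
  then obtain i where i: "i < m" "W i \<noteq> canonical_dual m d V i" by blast
  from assms(5) obtain \<epsilon> where DRS: "is_DRS m k d v V W" and "\<epsilon> > 0" and minimizer:
    "\<And>V' W'. is_DRS m k d v V' W' \<Longrightarrow> dP m V V' + dP m W W' < \<epsilon> \<Longrightarrow> FP m d V W \<le> FP m d V' W'"
    unfolding local_dP_minimizer_def by blast
  hence Pv: "is_Pv m k d v V" and V: "is_system m k d V" and inv: "invertible_mat (rs_op m d V)"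
    and W: "is_system m k d W" and dual: "cross_op m d W V = 1\<^sub>m d"
    unfolding is_DRS_def is_Pv_def is_RS_def is_dual_cross_op by auto
  define Z where "Z = (\<lambda>i. W i - canonical_dual m d V i)"
  note Z = dual_minus_canonical_dual[OF V inv W dual, folded Z_def]
  have W_path: "\<And>j. j < m \<Longrightarrow> dual_path m d V Z 1 j = W j"
    unfolding Z_def by (rule dual_path_one[OF V inv W])
  have Zi: "Z i \<noteq> 0\<^sub>m (k i) d"
    using W_path[OF i(1)] i(2) is_systemD[OF canonical_dual_system[OF V inv] i(1)]
    unfolding dual_path_def by auto
  have "0 \<le> sqrt (\<Sum>i<m. (frob_norm (Z i))\<^sup>2)" by (simp add: sum_nonneg)
  then obtain t where t: "0 \<le> t" "t < 1"
    and close: "\<bar>1 - t\<bar> * sqrt (\<Sum>i<m. (frob_norm (Z i))\<^sup>2) < \<epsilon>"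
    by (rule exists_param_near_one[OF \<open>\<epsilon> > 0\<close>])
  have "dP m V V + dP m W (dual_path m d V Z t) < \<epsilon>"
    using close dP_cong_left[OF W_path, symmetric] by (simp add: dP_self dP_dual_path[OF V inv Z])
  with dual_path_DRS[OF V inv Z Pv]
  have "FP m d V W \<le> FP m d V (dual_path m d V Z t)" by (rule minimizer)
  moreover have "FP m d V (dual_path m d V Z t) < FP m d V W"
    using FP_dual_path_decreasing[OF V inv Z i(1) Zi t] FP_cong_right[OF W_path] by simp
  ultimately show False by simp
qed

end
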